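(* Consider a multi-unit auction with $2$ identical items and $2$ unknown single-minded bidders. Let $\mathcal M_1$ be the randomized mechanism that with probability $1/2$ runs a second-price (ascending) auction for the grand bundle of both items, and with probability $1/2$ allocates a single item to a uniformly random bidder and then runs a second-price (ascending) auction for the second item among both bidders. Then $\mathcal M_1$ achieves a $\frac{4}{3}$-approximation to the optimal social welfare: on every instance, its expected welfare under truthful play is at least $\frac{3}{4}\mathrm{OPT}$.
   Context: A single-minded bidder $i$ has private $x_i\ge0$ and demand $d_i\in\{1,2\}$ with $v_i(q)=x_i$ for $q\ge d_i$ and $0$ otherwise. In the auction for the second item, a bidder already holding one item bids her marginal value for the second item; the highest bidder wins. $\mathrm{OPT}$ is the maximum of $v_1(q_1)+v_2(q_2)$ over nonnegative integers with $q_1+q_2\le2$. *)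

theory Defs
  imports Complex_Main
begin

text \<open>Valuation of a single-minded bidder with value x and demand d for q items.\<close>
definition val :: "real \<Rightarrow> nat \<Rightarrow> nat \<Rightarrow> real" where
  "val x d q = (if d \<le> q then x else 0)"

definition OPT :: "real \<Rightarrow> nat \<Rightarrow> real \<Rightarrow> nat \<Rightarrow> real" where
  "OPT x1 d1 x2 d2 =
     Max ((\<lambda>(q1, q2). val x1 d1 q1 + val x2 d2 q2) ` {(q1, q2). q1 + q2 \<le> 2})"

text \<open>Second-price auction for the grand bundle: each bidder bids v_i(2); the highest
  bidder receives both items (ties to bidder 1; welfare is tie-independent).\<close>
definition bundle_welfare :: "real \<Rightarrow> nat \<Rightarrow> real \<Rightarrow> nat \<Rightarrow> real" where
  "bundle_welfare x1 d1 x2 d2 =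
     (if val x1 d1 2 \<ge> val x2 d2 2 then val x1 d1 2 + val x2 d2 0
      else val x1 d1 0 + val x2 d2 2)"

text \<open>Bidder h (value xh, demand dh) already holds one item; the other bidder o
  (value xo, demand do) holds none. Second-price auction for the second item:
  h bids her marginal value v_h(2) - v_h(1), o bids v_o(1); the highest bidder wins
  (ties to the holder; welfare is tie-independent).\<close>
definition second_item_welfare :: "real \<Rightarrow> nat \<Rightarrow> real \<Rightarrow> nat \<Rightarrow> real" where
  "second_item_welfare xh dh xo do =
     (if val xh dh 2 - val xh dh 1 \<ge> val xo do 1 - val xo do 0
      then val xh dh 2 + val xo do 0
      else val xh dh 1 + val xo do 1)"

definition M1_welfare :: "real \<Rightarrow> nat \<Rightarrow> real \<Rightarrow> nat \<Rightarrow> real" where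
  "M1_welfare x1 d1 x2 d2 =
     (1/2) * bundle_welfare x1 d1 x2 d2
     + (1/2) * ((1/2) * second_item_welfare x1 d1 x2 d2
              + (1/2) * second_item_welfare x2 d2 x1 d1)"

end

theory Submission
  imports Defs
begin

text \<open>The bundle auction always realises \<open>max x1 x2\<close>, and in the second-item auction the
  bidder who already holds an item never ends up with welfare below her own value, so the
  expected welfare is at least \<open>max x1 x2 / 2 + (x1 + x2) / 4 \<ge> 3/4 * max x1 x2\<close>. Unless both
  bidders are unit-demand their demands do not fit into two items together, so the optimum is
  \<open>max x1 x2\<close>. If both are unit-demand, the optimum \<open>x1 + x2\<close> is attained by the second-item
  auction outright, and \<open>max x1 x2 \<ge> (x1 + x2) / 2\<close> settles the bundle half.\<close>

lemma val_le: "0 \<le> x \<Longrightarrow> val x d q \<le> x"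
  by (simp add: val_def)

lemma OPT_le:
  assumes "\<And>q1 q2. q1 + q2 \<le> 2 \<Longrightarrow> val x1 d1 q1 + val x2 d2 q2 \<le> c"
  shows "OPT x1 d1 x2 d2 \<le> c"
proof -
  have "{(q1, q2). q1 + q2 \<le> (2::nat)} \<subseteq> {..2} \<times> {..2}"
    by auto
  then have "finite {(q1, q2). q1 + q2 \<le> (2::nat)}"
    by (rule finite_subset) simp
  moreover have "(0, 0) \<in> {(q1, q2). q1 + q2 \<le> (2::nat)}"
    by simp
  ultimately show ?thesis
    unfolding OPT_def using assms by (subst Max_le_iff) fastforce+
qed

lemma OPT_le_sum: "0 \<le> x1 \<Longrightarrow> 0 \<le> x2 \<Longrightarrow> OPT x1 d1 x2 d2 \<le> x1 + x2"
  by (rule OPT_le) (simp add: add_mono val_le)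

lemma OPT_le_max:
  assumes "2 < d1 + d2" "0 \<le> x1" "0 \<le> x2"
  shows "OPT x1 d1 x2 d2 \<le> max x1 x2"
proof (rule OPT_le)
  fix q1 q2 :: nat
  assume "q1 + q2 \<le> 2"
  with assms(1) have "\<not> (d1 \<le> q1 \<and> d2 \<le> q2)"
    by linarith
  with assms(2,3) show "val x1 d1 q1 + val x2 d2 q2 \<le> max x1 x2"
    by (auto simp: val_def)
qed

lemma bundle_welfare_eq_max:
  "d1 \<in> {1, 2} \<Longrightarrow> d2 \<in> {1, 2} \<Longrightarrow> bundle_welfare x1 d1 x2 d2 = max x1 x2"
  by (auto simp: bundle_welfare_def val_def)

lemma second_item_welfare_ge_holder:
  "0 \<le> xo \<Longrightarrow> dh \<in> {1, 2} \<Longrightarrow> do \<in> {1, 2} \<Longrightarrow> xh \<le> second_item_welfare xh dh xo do"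
  by (auto simp: second_item_welfare_def val_def)

lemma second_item_welfare_unit_demand:
  "0 \<le> xo \<Longrightarrow> second_item_welfare xh 1 xo 1 = xh + xo"
  by (simp add: second_item_welfare_def val_def)

theorem claimB2:
  fixes x1 x2 :: real and d1 d2 :: nat
  assumes "x1 \<ge> 0" and "x2 \<ge> 0"
    and "d1 \<in> {1, 2}" and "d2 \<in> {1, 2}"
  shows "M1_welfare x1 d1 x2 d2 \<ge> (3/4) * OPT x1 d1 x2 d2"
proof (cases "d1 = 1 \<and> d2 = 1")
  case True
  have "3/4 * OPT x1 d1 x2 d2 \<le> 3/4 * (x1 + x2)"
    using OPT_le_sum[OF assms(1,2), of d1 d2] by simp
  also have "\<dots> \<le> max x1 x2 / 2 + (x1 + x2) / 2"
    by (simp add: max_def)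
  also have "\<dots> = M1_welfare x1 d1 x2 d2"
    using True assms second_item_welfare_unit_demand[of x2 x1] second_item_welfare_unit_demand[of x1 x2]
    by (simp add: M1_welfare_def bundle_welfare_eq_max field_simps)
  finally show ?thesis .
next
  case False
  with assms(3,4) have "2 < d1 + d2"
    by auto
  have "3/4 * OPT x1 d1 x2 d2 \<le> 3/4 * max x1 x2"
    using OPT_le_max[OF \<open>2 < d1 + d2\<close> assms(1,2)] by simp
  also have "\<dots> \<le> max x1 x2 / 2 + (x1 + x2) / 4"
    using assms(1,2) by (simp add: max_def)
  also have "\<dots> \<le> M1_welfare x1 d1 x2 d2"
    using assms second_item_welfare_ge_holder[of x2 d1 d2 x1] second_item_welfare_ge_holder[of x1 d2 d1 x2]
    by (simp add: M1_welfare_def bundle_welfare_eq_max)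
  finally show ?thesis .
qed

end
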